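(* Consider a Huffman-type combining procedure implemented with the two-queue method: there is a first queue of single (leaf) items and a second queue of compound items; each step removes two nodes, makes them the two children of a new compound node, and appends that new node to the tail of the second queue, until a single node (the root of the final tree) remains; in particular, once the first queue is empty, each step removes the two nodes at the head of the second queue. Suppose that at some step the first queue is empty and $n\ge 1$ compound items remain (all in the second queue). Then, in the final tree, the nodes corresponding to these $n$ compound items lie on levels (depths from the root) differing by at most one, i.e., they are the leaves of a complete binary tree; furthermore, every one of these items that ends up at level $\lceil \log_2 n\rceil$ is closer to the head of the second queue than every one of these items that ends up at level $\lceil \log_2 n\rceil-1$ (if any). *)

theory Defs
  imports Complex_Main
begin

datatype 'a btree = Leaf 'a | Node "'a btree" "'a btree"

fun queue_step :: "'a btree list \<Rightarrow> 'a btree list" where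
  "queue_step (a # b # rest) = rest @ [Node a b]"
| "queue_step q = q"

text \<open>Run the procedure until a single node (the root) remains; each step
  shortens the queue by one, so this takes length q - 1 steps.\<close>
definition final_tree :: "'a btree list \<Rightarrow> 'a btree" where
  "final_tree q = hd ((queue_step ^^ (length q - 1)) q)"

fun leaf_depths :: "'a btree \<Rightarrow> ('a \<times> nat) set" where
  "leaf_depths (Leaf x) = {(x, 0)}"
| "leaf_depths (Node l r) = {(x, Suc d) | x d. (x, d) \<in> leaf_depths l \<union> leaf_depths r}"

end

theory Submission
  imports Defs "HOL-Library.Discrete_Functions"
begin

text \<open>Number the nodes of the final tree as in a binary heap: the compound node u has
  the children 2u + 1 and 2u, the root is 1, and the item xs ! i is the leaf 2n - 1 - i,
  so the leaves are exactly the numbers n, ..., 2n - 1. By induction on the number of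
  steps, the queue always holds the segment 2b - 1, ..., b of numbers in decreasing
  order: the two head nodes 2b - 1 and 2b - 2 are combined into b - 1, which extends the
  segment at the tail. Hence the final tree is the heap on 1, ..., 2n - 1, and the leaf v
  lies at depth floor_log v. Since n \<le> 2^k < 2n for k = \<lceil>log 2 n\<rceil>, the leaves
  n, ..., 2n - 1 have depth k - 1 or k, and the deeper ones carry the larger numbers,
  i.e. the smaller queue positions.\<close>

text \<open>Node 0 is never used; declaring it a leaf makes the recursion terminate.\<close>

function heap_tree :: "(nat \<Rightarrow> 'a) \<Rightarrow> nat \<Rightarrow> nat \<Rightarrow> 'a btree" where
  "heap_tree f n u =
     (if u = 0 \<or> n \<le> u then Leaf (f u) else Node (heap_tree f n (2 * u + 1)) (heap_tree f n (2 * u)))"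
  by pat_completeness auto
termination by (relation "measure (\<lambda>(f, n, u). n - u)") auto

declare heap_tree.simps [simp del]

lemma heap_tree_Node:
  "1 \<le> u \<Longrightarrow> u < n \<Longrightarrow> heap_tree f n u = Node (heap_tree f n (2 * u + 1)) (heap_tree f n (2 * u))"
  by (simp add: heap_tree.simps)

lemma heap_tree_Leaf: "n \<le> u \<Longrightarrow> heap_tree f n u = Leaf (f u)"
  by (simp add: heap_tree.simps)

lemma div_two_power_Suc_eq_iff:
  fixes v :: nat
  shows "v div 2 ^ Suc d = u \<longleftrightarrow> v div 2 ^ d = 2 * u + 1 \<or> v div 2 ^ d = 2 * u"
proof -
  have "v div 2 ^ Suc d = v div 2 ^ d div 2"
    by (metis div_mult2_eq power_Suc2)
  then show ?thesis
    by linarith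
qed

lemma div_two_power_eq_1_iff:
  fixes v :: nat
  assumes "v > 0"
  shows "v div 2 ^ d = 1 \<longleftrightarrow> d = floor_log v"
proof -
  have "v div 2 ^ d = 1 \<longleftrightarrow> 1 \<le> v div 2 ^ d \<and> v div 2 ^ d < 2"
    by auto
  also have "\<dots> \<longleftrightarrow> 2 ^ d \<le> v \<and> v < 2 * 2 ^ d"
    by (simp add: div_less_iff_less_mult le_div_geq Suc_le_eq div_greater_zero_iff mult.commute)
  finally show ?thesis
    using assms floor_log_eqI floor_log_exp2_le floor_log_exp2_gt by metis
qed

lemma div_two_power_eq_imp_exp_eq_0:
  fixes v :: nat
  assumes "v div 2 ^ d = u" and "v < 2 * u"
  shows "d = 0"
proof (rule ccontr)
  assume "d \<noteq> 0"
  then have "2 * u \<le> u * 2 ^ d"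
    by (cases d) simp_all
  also have "\<dots> \<le> v"
    using assms(1) div_times_less_eq_dividend by blast
  finally show False
    using assms(2) by linarith
qed

text \<open>v div 2^d is the ancestor of the node v at distance d.\<close>

lemma leaf_depths_heap_tree:
  assumes "1 \<le> u" "u < 2 * n"
  shows "(x, d) \<in> leaf_depths (heap_tree f n u) \<longleftrightarrow>
    (\<exists>v. n \<le> v \<and> v < 2 * n \<and> v div 2 ^ d = u \<and> x = f v)"
  using assms
proof (induction f n u arbitrary: x d rule: heap_tree.induct)
  case (1 f n u)
  show ?case
  proof (cases "n \<le> u")
    case True
    have below_leaf: "d = 0 \<and> v = u" if "v < 2 * n" "v div 2 ^ d = u" for v
      using that True div_two_power_eq_imp_exp_eq_0[of v d u] by simp
    show ?thesis
      using True 1(4) by (auto simp add: heap_tree_Leaf dest: below_leaf)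
  next
    case False
    then have "2 * u + 1 < 2 * n" "1 \<le> 2 * u"
      using 1(3) by simp_all
    with False 1(1,2) have IH_left: "\<And>x d. (x, d) \<in> leaf_depths (heap_tree f n (2 * u + 1)) \<longleftrightarrow>
        (\<exists>v. n \<le> v \<and> v < 2 * n \<and> v div 2 ^ d = 2 * u + 1 \<and> x = f v)"
      and IH_right: "\<And>x d. (x, d) \<in> leaf_depths (heap_tree f n (2 * u)) \<longleftrightarrow>
        (\<exists>v. n \<le> v \<and> v < 2 * n \<and> v div 2 ^ d = 2 * u \<and> x = f v)"
      by simp_all
    show ?thesis
    proof (cases d)
      case 0
      then show ?thesis
        using False 1(3) by (auto simp add: heap_tree_Node)
    next
      case (Suc d')
      then have "(x, d) \<in> leaf_depths (heap_tree f n u) \<longleftrightarrow>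
          (x, d') \<in> leaf_depths (heap_tree f n (2 * u + 1)) \<or> (x, d') \<in> leaf_depths (heap_tree f n (2 * u))"
        using False 1(3) by (auto simp add: heap_tree_Node)
      then show ?thesis
        unfolding IH_left IH_right Suc div_two_power_Suc_eq_iff by blast
    qed
  qed
qed

lemma leaf_depths_heap_tree_root:
  assumes "n \<ge> 1"
  shows "leaf_depths (heap_tree f n 1) = (\<lambda>v. (f v, floor_log v)) ` {n..<2 * n}"
proof (intro set_eqI)
  fix p :: "'a \<times> nat"
  obtain x d where p: "p = (x, d)"
    by fastforce
  have depth_iff: "v div 2 ^ d = 1 \<longleftrightarrow> d = floor_log v" if "n \<le> v" for v
    using that assms by (intro div_two_power_eq_1_iff) simp
  have "(x, d) \<in> leaf_depths (heap_tree f n 1) \<longleftrightarrow>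
      (\<exists>v. n \<le> v \<and> v < 2 * n \<and> v div 2 ^ d = 1 \<and> x = f v)"
    using assms by (intro leaf_depths_heap_tree) simp_all
  also have "\<dots> \<longleftrightarrow> (\<exists>v\<in>{n..<2 * n}. (x, d) = (f v, floor_log v))"
    using depth_iff by auto
  finally show "p \<in> leaf_depths (heap_tree f n 1) \<longleftrightarrow> p \<in> (\<lambda>v. (f v, floor_log v)) ` {n..<2 * n}"
    by (simp add: p image_iff)
qed

lemma queue_step_heap_segment:
  assumes "b \<ge> 1" and "T b = Node (T (2 * b + 1)) (T (2 * b))"
  shows "queue_step (map T (rev [Suc b..<2 * Suc b])) = map T (rev [b..<2 * b])"
proof -
  have "rev [Suc b..<2 * Suc b] = (2 * b + 1) # 2 * b # rev [Suc b..<2 * b]"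
    using assms(1) by simp
  moreover have "rev [b..<2 * b] = rev [Suc b..<2 * b] @ [b]"
    using assms(1) by (simp add: upt_conv_Cons)
  ultimately show ?thesis
    using assms(2) by simp
qed

lemma funpow_queue_step_heap_segment:
  assumes "\<And>u. 1 \<le> u \<Longrightarrow> u < n \<Longrightarrow> T u = Node (T (2 * u + 1)) (T (2 * u))" and "s < n"
  shows "(queue_step ^^ s) (map T (rev [n..<2 * n])) = map T (rev [n - s..<2 * (n - s)])"
  using assms(2)
proof (induction s)
  case (Suc s)
  define b where "b = n - Suc s"
  have b: "n - s = Suc b" "b \<ge> 1" "b < n"
    using Suc.prems unfolding b_def by arith+
  have "(queue_step ^^ Suc s) (map T (rev [n..<2 * n])) = queue_step (map T (rev [Suc b..<2 * Suc b]))"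
    using Suc b(1) by simp
  also have "\<dots> = map T (rev [b..<2 * b])"
    using b(2,3) by (intro queue_step_heap_segment assms(1))
  finally show ?case
    unfolding b_def .
qed simp

lemma final_tree_heap_segment:
  assumes "\<And>u. 1 \<le> u \<Longrightarrow> u < n \<Longrightarrow> T u = Node (T (2 * u + 1)) (T (2 * u))" and "n \<ge> 1"
  shows "final_tree (map T (rev [n..<2 * n])) = T 1"
proof -
  have "[1..<2] = [1::nat]"
    by (simp add: upt_rec)
  then have "(queue_step ^^ (n - 1)) (map T (rev [n..<2 * n])) = [T 1]"
    using funpow_queue_step_heap_segment[of n T "n - 1", OF assms(1)] assms(2) by simp
  then show ?thesis
    by (simp add: final_tree_def)
qed

lemma leaf_list_eq_heap_segment:
  assumes "length xs = n"
  shows "map Leaf xs = map (heap_tree (\<lambda>v. xs ! (2 * n - 1 - v)) n) (rev [n..<2 * n])"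
  using assms by (intro nth_equalityI) (auto simp add: rev_nth heap_tree_Leaf)

lemma atLeastLessThan_eq_reflect_lessThan:
  fixes n :: nat
  shows "{n..<2 * n} = (\<lambda>i. 2 * n - 1 - i) ` {..<n}"
proof (intro set_eqI iffI)
  fix v
  assume "v \<in> {n..<2 * n}"
  then show "v \<in> (\<lambda>i. 2 * n - 1 - i) ` {..<n}"
    by (intro image_eqI[of _ _ "2 * n - 1 - v"]) auto
qed auto

lemma leaf_depths_final_tree:
  assumes "length xs = n" "n \<ge> 1"
  shows "leaf_depths (final_tree (map Leaf xs)) = (\<lambda>i. (xs ! i, floor_log (2 * n - 1 - i))) ` {..<n}"
proof -
  let ?f = "\<lambda>v. xs ! (2 * n - 1 - v)"
  have "final_tree (map Leaf xs) = heap_tree ?f n 1"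
    unfolding leaf_list_eq_heap_segment[OF assms(1)]
    using assms(2) by (intro final_tree_heap_segment heap_tree_Node)
  also have "leaf_depths \<dots> = (\<lambda>v. (?f v, floor_log v)) ` (\<lambda>i. 2 * n - 1 - i) ` {..<n}"
    unfolding atLeastLessThan_eq_reflect_lessThan[symmetric]
    using assms(2) by (rule leaf_depths_heap_tree_root)
  also have "\<dots> = (\<lambda>i. (xs ! i, floor_log (2 * n - 1 - i))) ` {..<n}"
    unfolding image_image by (intro image_cong) auto
  finally show ?thesis .
qed

lemma ceiling_log2_nat_bounds:
  fixes n :: nat
  assumes "n \<ge> 1"
  shows "n \<le> 2 ^ nat \<lceil>log 2 (real n)\<rceil> \<and> 2 ^ nat \<lceil>log 2 (real n)\<rceil> < 2 * n"
proof (cases "n = 1")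
  case False
  then obtain i where i: "2 ^ i < n" "n \<le> 2 ^ (i + 1)"
    using assms ex_power_ivl2[of 2 n] by auto
  have "\<lceil>log (real 2) (real n)\<rceil> = int i + 1"
    using i by (intro ceiling_log_nat_eq_if) simp_all
  then have "nat \<lceil>log 2 (real n)\<rceil> = i + 1"
    by simp
  then show ?thesis
    using i by simp
qed simp

lemma floor_log_between_n_and_2n:
  fixes n v :: nat
  assumes "n \<le> v" "v < 2 * n"
  defines "k \<equiv> nat \<lceil>log 2 (real n)\<rceil>"
  shows "floor_log v = k \<or> floor_log v + 1 = k"
proof -
  have k: "n \<le> 2 ^ k" "2 ^ k < 2 * n"
    using ceiling_log2_nat_bounds[of n] assms unfolding k_def by auto
  have "(2::nat) ^ floor_log v < 2 ^ Suc k"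
    using floor_log_exp2_le[of v] assms k by simp
  then have "floor_log v < Suc k"
    by (rule power_less_imp_less_exp[rotated]) simp
  moreover have "(2::nat) ^ k < 2 ^ (floor_log v + 2)"
    using floor_log_exp2_gt[of v] assms k by simp
  then have "k < floor_log v + 2"
    by (rule power_less_imp_less_exp[rotated]) simp
  ultimately show ?thesis
    by linarith
qed

lemma leaf_depths_final_tree_distinct_iff:
  assumes "distinct xs" "length xs = n" "n \<ge> 1" "i < n"
  shows "(xs ! i, d) \<in> leaf_depths (final_tree (map Leaf xs)) \<longleftrightarrow> d = floor_log (2 * n - 1 - i)"
proof -
  have "(xs ! i, d) \<in> leaf_depths (final_tree (map Leaf xs)) \<longleftrightarrow>
      (\<exists>j\<in>{..<n}. xs ! i = xs ! j \<and> d = floor_log (2 * n - 1 - j))"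
    unfolding leaf_depths_final_tree[OF assms(2,3)] image_iff by simp
  also have "\<dots> \<longleftrightarrow> d = floor_log (2 * n - 1 - i)"
    using assms(2,4) nth_eq_iff_index_eq[OF assms(1)] by auto
  finally show ?thesis .
qed

theorem lemma2:
  fixes xs :: "'a list" and n :: nat
  assumes "distinct xs" and "length xs = n" and "n \<ge> 1"
  shows "(\<forall>i<n. \<exists>d. (xs ! i, d) \<in> leaf_depths (final_tree (map Leaf xs)))
       \<and> (\<forall>i<n. \<forall>d. (xs ! i, d) \<in> leaf_depths (final_tree (map Leaf xs)) \<longrightarrow>
              d = nat \<lceil>log 2 (real n)\<rceil> \<or> d + 1 = nat \<lceil>log 2 (real n)\<rceil>)
       \<and> (\<forall>i<n. \<forall>j<n. \<forall>d.
              (xs ! i, nat \<lceil>log 2 (real n)\<rceil>) \<in> leaf_depths (final_tree (map Leaf xs))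
              \<and> (xs ! j, d) \<in> leaf_depths (final_tree (map Leaf xs))
              \<and> d + 1 = nat \<lceil>log 2 (real n)\<rceil> \<longrightarrow> i < j)"
proof (intro conjI allI impI)
  fix i
  assume "i < n"
  then show "\<exists>d. (xs ! i, d) \<in> leaf_depths (final_tree (map Leaf xs))"
    using leaf_depths_final_tree_distinct_iff[OF assms] by blast
next
  fix i d
  assume "i < n" and "(xs ! i, d) \<in> leaf_depths (final_tree (map Leaf xs))"
  then have "d = floor_log (2 * n - 1 - i)"
    using leaf_depths_final_tree_distinct_iff[OF assms] by blast
  moreover have "n \<le> 2 * n - 1 - i" "2 * n - 1 - i < 2 * n"
    using \<open>i < n\<close> by arith+
  ultimately show "d = nat \<lceil>log 2 (real n)\<rceil> \<or> d + 1 = nat \<lceil>log 2 (real n)\<rceil>"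
    using floor_log_between_n_and_2n by blast
next
  fix i j d
  assume "i < n" "j < n" and depths:
    "(xs ! i, nat \<lceil>log 2 (real n)\<rceil>) \<in> leaf_depths (final_tree (map Leaf xs))
     \<and> (xs ! j, d) \<in> leaf_depths (final_tree (map Leaf xs))
     \<and> d + 1 = nat \<lceil>log 2 (real n)\<rceil>"
  then have "nat \<lceil>log 2 (real n)\<rceil> = floor_log (2 * n - 1 - i)" "d = floor_log (2 * n - 1 - j)"
    using leaf_depths_final_tree_distinct_iff[OF assms] by blast+
  with depths have "floor_log (2 * n - 1 - j) < floor_log (2 * n - 1 - i)"
    by linarith
  then have "2 * n - 1 - j < 2 * n - 1 - i"
    using floor_log_le_iff[of "2 * n - 1 - i" "2 * n - 1 - j"] by linarith
  then show "i < j"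
    by linarith
qed

end
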